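(* Let $n\geq 1$ and let $D_i$ ($i<n$) be digraphs on vertex sets $V_i$ (finite or infinite) such that there is a single set $R$ with $V_i\cap V_j=R$ for all $i<j<n$, and for all $i<j<n$ there is a digraph isomorphism $\psi_{i,j}:V_i\to V_j$ from $D_i$ to $D_j$ which is the identity on $R$. Then $D=\bigcup\{D_i:i<n\}$ (vertex set $\bigcup V_i$, arc set $\bigcup E(D_i)$) is a digraph. Fix $k\geq 3$ and assume each $D_i$ has digirth bigger than $k$. Then: (1) for $i<j<n$ and $\alpha\in V_i\setminus R$, every directed path in $D$ from $\alpha$ to $\psi_{i,j}(\alpha)$ has length $>k$; (2) $D$ has digirth bigger than $k$; (3) if moreover $n>k$ and $\alpha_i\in V_i\setminus R$ ($i<n$) satisfy $\alpha_j=\psi_{i,j}(\alpha_i)$ for $i<j<n$, then the digraph $D^*$ with $V(D^* )=V(D)$ and $E(D^* )=E(D)\cup\{\alpha_{n-1}\alpha_0\}\cup\{\alpha_i\alpha_{i+1}:i<n-1\}$ has digirth bigger than $k$.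
   Context: A digraph is a pair $D=(V,E)$ with $E\subseteq V^2$ such that $uv\in E$ implies $vu\notin E$. The digirth is the length of the shortest directed cycle; the length of a path is its number of arcs. *)

theory Defs
  imports Main
begin

definition digraph :: "'a set \<Rightarrow> ('a \<times> 'a) set \<Rightarrow> bool" where
  "digraph V E \<longleftrightarrow> E \<subseteq> V \<times> V \<and> (\<forall>u v. (u, v) \<in> E \<longrightarrow> (v, u) \<notin> E)"

text \<open>A directed path, given as the (nonempty, repetition-free) list of its vertices
  v_0,...,v_m; its length (number of arcs) is length p - 1.\<close>
definition dpath :: "'a set \<Rightarrow> ('a \<times> 'a) set \<Rightarrow> 'a list \<Rightarrow> bool" where
  "dpath V E p \<longleftrightarrow> p \<noteq> [] \<and> distinct p \<and> set p \<subseteq> V \<and>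
     (\<forall>i. Suc i < length p \<longrightarrow> (p ! i, p ! Suc i) \<in> E)"

text \<open>A directed cycle, given as the (nonempty, repetition-free) list of its vertices
  v_0,...,v_{m-1} with arcs v_i v_{i+1 mod m}; its length is length c.\<close>
definition dcycle :: "'a set \<Rightarrow> ('a \<times> 'a) set \<Rightarrow> 'a list \<Rightarrow> bool" where
  "dcycle V E c \<longleftrightarrow> c \<noteq> [] \<and> distinct c \<and> set c \<subseteq> V \<and>
     (\<forall>i < length c. (c ! i, c ! ((i + 1) mod length c)) \<in> E)"

text \<open>Digirth bigger than k: every directed cycle has length > k
  (vacuous for acyclic digraphs, whose digirth is infinite).\<close>
definition digirth_gt :: "'a set \<Rightarrow> ('a \<times> 'a) set \<Rightarrow> nat \<Rightarrow> bool" where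
  "digirth_gt V E k \<longleftrightarrow> (\<forall>c. dcycle V E c \<longrightarrow> k < length c)"

end

theory Submission
  imports Defs
begin

text \<open>For each \<open>t < n\<close> the isomorphisms \<open>\<psi>\<close> glue to a retraction of \<open>D\<close> onto \<open>D\<^sub>t\<close>: a digraph
  homomorphism \<open>D \<rightarrow> D\<^sub>t\<close> that fixes \<open>V\<^sub>t\<close> and identifies every \<open>\<psi> i j \<alpha>\<close> with \<open>\<alpha>\<close>
  (it is well defined because the \<open>\<psi>\<close> fix the common part \<open>R\<close>). Closed walks of \<open>D\<close> are thus mapped
  to closed walks of \<open>D\<^sub>t\<close> of the same length, and a closed walk of positive length contains a directed
  cycle, so short cycles of \<open>D\<close>, and short paths from \<open>\<alpha>\<close> to \<open>\<psi> i j \<alpha>\<close>, would give short cycles in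
  some \<open>D\<^sub>t\<close>. In \<open>D\<^sup>*\<close> a cycle using an arc of \<open>D\<close> is handled the same way, since the retraction onto
  \<open>D\<^sub>0\<close> collapses all new arcs to the single vertex \<open>\<alpha>\<^sub>0\<close>; a cycle consisting of new arcs only runs
  around the whole cycle \<open>\<alpha>\<^sub>0 \<dots> \<alpha>\<^sub>n\<^sub>-\<^sub>1\<close> and thus has length at least \<open>n > k\<close>.\<close>

lemma closed_walk_contains_dcycle:
  assumes "E \<subseteq> V \<times> V" and "(x, x) \<in> E ^^ m" and "0 < m"
  shows "\<exists>c. dcycle V E c \<and> length c \<le> m"
  using assms(2,3)
proof (induction m arbitrary: x rule: less_induct)
  case (less m)
  from less.prems(1) obtain f where f0: "f 0 = x" and fm: "f m = x"
    and step: "\<forall>i<m. (f i, f (Suc i)) \<in> E" unfolding relpow_fun_conv by blast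
  show ?case
  proof (cases "distinct (map f [0..<m])")
    case True
    have wrap: "f (Suc i mod m) = f (Suc i)" if "i < m" for i
    proof (cases "Suc i < m")
      case False
      with that have "Suc i = m" by simp
      with f0 fm show ?thesis by simp
    qed simp
    have "dcycle V E (map f [0..<m])"
      unfolding dcycle_def
    proof (intro conjI allI impI)
      show "map f [0..<m] \<noteq> []" using less.prems(2) by simp
      show "set (map f [0..<m]) \<subseteq> V" using step assms(1) by fastforce
      fix i assume "i < length (map f [0..<m])"
      then show "(map f [0..<m] ! i, map f [0..<m] ! ((i + 1) mod length (map f [0..<m]))) \<in> E"
        using step wrap[of i] by simp
    qed (use True in simp)
    then show ?thesis by force
  next
    case False
    then obtain a b where ab: "a < b" "b < m" "f a = f b"
      by (auto simp: distinct_conv_nth) (metis linorder_neq_iff)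
    have "(f a, f b) \<in> E ^^ (b - a)"
      unfolding relpow_fun_conv
      by (rule exI[of _ "\<lambda>i. f (a + i)"]) (use ab step in auto)
    with ab less.IH[of "b - a" "f a"] show ?thesis by force
  qed
qed

lemma digirth_gt_closed_walk:
  assumes "digirth_gt V E k" and "E \<subseteq> V \<times> V" and "(x, x) \<in> E ^^ m" and "0 < m"
  shows "k < m"
  using closed_walk_contains_dcycle[OF assms(2-4)] assms(1)
  unfolding digirth_gt_def by (meson order.strict_trans2)

lemma relpow_hom:
  assumes "\<And>u v. (u, v) \<in> A \<Longrightarrow> (f u, f v) \<in> B" and "(x, y) \<in> A ^^ m"
  shows "(f x, f y) \<in> B ^^ m"
  using assms(2)
proof (induction m arbitrary: y)
  case (Suc m)
  then obtain z where "(x, z) \<in> A ^^ m" "(z, y) \<in> A" by auto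
  then show ?case using Suc.IH assms(1) by auto
qed simp

lemma relpow_Un_Id_shorter:
  "(x, y) \<in> (B \<union> Id) ^^ m \<Longrightarrow> \<exists>j\<le>m. (x, y) \<in> B ^^ j"
proof (induction m arbitrary: y)
  case (Suc m)
  then obtain z where z: "(x, z) \<in> (B \<union> Id) ^^ m" "(z, y) \<in> B \<union> Id" by auto
  from Suc.IH[OF z(1)] obtain j where "j \<le> m" "(x, z) \<in> B ^^ j" by auto
  with z(2) show ?case by (metis Un_iff le_SucI not_less_eq_eq pair_in_Id_conv relpow_Suc_I)
qed auto

lemma dcycle_relpow:
  assumes "dcycle V E c" and "s < length c"
  shows "(c ! s, c ! ((s + t) mod length c)) \<in> E ^^ t"
proof (induction t)
  case (Suc t)
  have "(c ! ((s + t) mod length c), c ! (((s + t) mod length c + 1) mod length c)) \<in> E"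
    using assms(1,2) unfolding dcycle_def by simp
  then show ?case using Suc by (auto simp: mod_Suc_eq)
qed (use assms(2) in simp)

lemma dpath_relpow:
  assumes "dpath V E p"
  shows "(hd p, last p) \<in> E ^^ (length p - 1)"
  unfolding relpow_fun_conv
  by (rule exI[of _ "\<lambda>i. p ! i"]) (use assms in \<open>auto simp: dpath_def hd_conv_nth last_conv_nth\<close>)

lemma cycle_arcs_mod:
  assumes "0 < n"
  shows "{(\<alpha> (n - 1), \<alpha> 0)} \<union> {(\<alpha> i, \<alpha> (i + 1)) | i. i < n - 1}
    = {(\<alpha> q, \<alpha> (Suc q mod n)) | q. q < n}"
proof (intro equalityI subsetI)
  fix e assume "e \<in> {(\<alpha> (n - 1), \<alpha> 0)} \<union> {(\<alpha> i, \<alpha> (i + 1)) | i. i < n - 1}"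
  then show "e \<in> {(\<alpha> q, \<alpha> (Suc q mod n)) | q. q < n}"
  proof (elim UnE)
    assume "e \<in> {(\<alpha> (n - 1), \<alpha> 0)}"
    with assms show ?thesis by (intro CollectI exI[of _ "n - 1"]) auto
  qed auto
next
  fix e assume "e \<in> {(\<alpha> q, \<alpha> (Suc q mod n)) | q. q < n}"
  then obtain q where "q < n" "e = (\<alpha> q, \<alpha> (Suc q mod n))" by blast
  then show "e \<in> {(\<alpha> (n - 1), \<alpha> 0)} \<union> {(\<alpha> i, \<alpha> (i + 1)) | i. i < n - 1}"
    by (cases "q = n - 1") auto
qed

lemma cycle_arcs_relpow:
  assumes "inj_on \<alpha> {..<n}" and "p < n"
    and "(\<alpha> p, y) \<in> {(\<alpha> q, \<alpha> (Suc q mod n)) | q. q < n} ^^ t"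
  shows "y = \<alpha> ((p + t) mod n)"
  using assms(3)
proof (induction t arbitrary: y)
  case (Suc t)
  then obtain q where q: "\<alpha> ((p + t) mod n) = \<alpha> q" "q < n" "y = \<alpha> (Suc q mod n)" by auto
  moreover have "(p + t) mod n < n" using assms(2) by simp
  ultimately have "q = (p + t) mod n" using assms(1) by (simp add: inj_on_def)
  with q(3) show ?case by (simp add: mod_Suc_eq)
qed (use assms(2) in simp)

lemma cycle_arcs_closed_walk:
  assumes "inj_on \<alpha> {..<n}"
    and "(x, x) \<in> {(\<alpha> q, \<alpha> (Suc q mod n)) | q. q < n} ^^ m" and "0 < m"
  shows "n \<le> m"
proof -
  obtain m' where m: "m = Suc m'" using assms(3) gr0_implies_Suc by blast
  with assms(2) obtain p where p: "p < n" "x = \<alpha> p" by (blast dest: relpow_Suc_D2)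
  with assms have "\<alpha> p = \<alpha> ((p + m) mod n)" by (simp add: cycle_arcs_relpow)
  with assms(1) p(1) have "(p + m) mod n = p mod n" by (simp add: inj_on_def)
  then have "n dvd m" by (metis mod_add_self1 add_diff_cancel_left' mod_eq_dvd_iff_nat le_add1)
  then show ?thesis using assms(3) by (simp add: dvd_imp_le)
qed

locale amalgam =
  fixes n :: nat
    and V :: "nat \<Rightarrow> 'a set"
    and E :: "nat \<Rightarrow> ('a \<times> 'a) set"
    and R :: "'a set"
    and \<psi> :: "nat \<Rightarrow> nat \<Rightarrow> 'a \<Rightarrow> 'a"
  assumes n_pos: "n \<ge> 1"
    and digr: "\<And>i. i < n \<Longrightarrow> digraph (V i) (E i)"
    and inter: "\<And>i j. i < j \<Longrightarrow> j < n \<Longrightarrow> V i \<inter> V j = R"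
    and bij: "\<And>i j. i < j \<Longrightarrow> j < n \<Longrightarrow> bij_betw (\<psi> i j) (V i) (V j)"
    and iso: "\<And>i j u v. i < j \<Longrightarrow> j < n \<Longrightarrow> u \<in> V i \<Longrightarrow> v \<in> V i \<Longrightarrow>
                ((u, v) \<in> E i \<longleftrightarrow> (\<psi> i j u, \<psi> i j v) \<in> E j)"
    and idR: "\<And>i j x. i < j \<Longrightarrow> j < n \<Longrightarrow> x \<in> R \<Longrightarrow> \<psi> i j x = x"
begin

definition transport :: "nat \<Rightarrow> nat \<Rightarrow> 'a \<Rightarrow> 'a" where
  "transport l t x =
     (if l = t then x else if l < t then \<psi> l t x else inv_into (V t) (\<psi> t l) x)"

definition retract :: "nat \<Rightarrow> 'a \<Rightarrow> 'a" where
  "retract t x = transport (SOME l. l < n \<and> x \<in> V l) t x"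

lemma arcs_subset: "i < n \<Longrightarrow> E i \<subseteq> V i \<times> V i"
  using digr unfolding digraph_def by blast

lemma transport_R:
  assumes "l < n" "t < n" "x \<in> R"
  shows "transport l t x = x"
proof -
  consider "l = t" | "l < t" | "t < l" by linarith
  then show ?thesis
  proof cases
    case 3
    have "x \<in> V t" using inter[OF 3 assms(1)] assms(3) by blast
    then show ?thesis
      using 3 idR[OF 3 assms(1,3)] bij_betw_imp_inj_on[OF bij[OF 3 assms(1)]]
      by (simp add: transport_def) (metis inv_into_f_f)
  qed (use assms idR in \<open>simp_all add: transport_def\<close>)
qed

lemma transport_arc:
  assumes "l < n" "t < n" "(u, v) \<in> E l"
  shows "(transport l t u, transport l t v) \<in> E t"
proof -
  have uv: "u \<in> V l" "v \<in> V l" using arcs_subset[OF assms(1)] assms(3) by auto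
  consider "l = t" | "l < t" | "t < l" by linarith
  then show ?thesis
  proof cases
    case 3
    have im: "\<psi> t l ` V t = V l" using bij[OF 3 assms(1)] by (simp add: bij_betw_def)
    let ?u = "inv_into (V t) (\<psi> t l) u" and ?v = "inv_into (V t) (\<psi> t l) v"
    have "?u \<in> V t" "?v \<in> V t" "\<psi> t l ?u = u" "\<psi> t l ?v = v"
      using uv im by (auto intro: inv_into_into simp: f_inv_into_f)
    then have "(?u, ?v) \<in> E t" using iso[OF 3 assms(1)] assms(3) by metis
    then show ?thesis using 3 by (simp add: transport_def)
  qed (use assms iso uv in \<open>simp_all add: transport_def\<close>)
qed

lemma retract_eq:
  assumes "l < n" "t < n" "x \<in> V l"
  shows "retract t x = transport l t x"
proof -
  define l' where "l' = (SOME l. l < n \<and> x \<in> V l)"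
  have l': "l' < n" "x \<in> V l'" using someI[of "\<lambda>l. l < n \<and> x \<in> V l"] assms l'_def by auto
  have "x \<in> R" if "l' \<noteq> l"
    using that inter[of l' l] inter[of l l'] l' assms by (cases "l' < l") auto
  then show ?thesis using transport_R l' assms by (cases "l' = l") (auto simp: retract_def l'_def)
qed

lemma retract_hom:
  assumes "t < n" "(u, v) \<in> (\<Union>i<n. E i)"
  shows "(retract t u, retract t v) \<in> E t"
proof -
  obtain l where l: "l < n" "(u, v) \<in> E l" using assms by auto
  with arcs_subset have "u \<in> V l" "v \<in> V l" by auto
  with l assms transport_arc show ?thesis by (simp add: retract_eq)
qed

lemma retract_id:
  assumes "t < n" "a \<in> V t"
  shows "retract t a = a"
  using retract_eq[OF assms(1) assms] by (simp add: transport_def)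

lemma retract_psi:
  assumes "i < j" "j < n" "a \<in> V i"
  shows "retract i (\<psi> i j a) = a"
proof -
  have b: "bij_betw (\<psi> i j) (V i) (V j)" using bij[OF assms(1,2)] .
  then have "\<psi> i j a \<in> V j" using assms(3) by (auto dest: bij_betwE)
  then show ?thesis
    using assms retract_eq bij_betw_imp_inj_on[OF b] by (simp add: transport_def inv_into_f_f)
qed

lemma retract_relpow:
  assumes "t < n" "(x, y) \<in> (\<Union>i<n. E i) ^^ m"
  shows "(retract t x, retract t y) \<in> E t ^^ m"
  using relpow_hom[OF _ assms(2)] retract_hom[OF assms(1)] by blast

lemma digraph_Union: "digraph (\<Union>i<n. V i) (\<Union>i<n. E i)"
  unfolding digraph_def
proof (intro conjI allI impI)
  show "(\<Union>i<n. E i) \<subseteq> (\<Union>i<n. V i) \<times> (\<Union>i<n. V i)" using arcs_subset by blast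
  fix u v assume uv: "(u, v) \<in> (\<Union>i<n. E i)"
  have n0: "0 < n" using n_pos by simp
  show "(v, u) \<notin> (\<Union>i<n. E i)"
  proof
    assume "(v, u) \<in> (\<Union>i<n. E i)"
    with retract_hom[OF n0 uv] retract_hom[OF n0] digr[OF n0] show False
      unfolding digraph_def by blast
  qed
qed

lemma inj_on_outside_R:
  assumes "\<And>i. i < n \<Longrightarrow> \<alpha> i \<in> V i - R"
  shows "inj_on \<alpha> {..<n}"
proof (rule inj_onI)
  have "\<alpha> i \<noteq> \<alpha> j" if "i < j" "j < n" for i j
    using assms[of i] assms[of j] inter[OF that] that by auto
  then show "i = j" if "i \<in> {..<n}" "j \<in> {..<n}" "\<alpha> i = \<alpha> j" for i j
    using that by (metis lessThan_iff linorder_neqE_nat)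
qed

lemma retract_0_outside_R:
  assumes "\<And>i. i < n \<Longrightarrow> \<alpha> i \<in> V i - R"
    and "\<And>i j. i < j \<Longrightarrow> j < n \<Longrightarrow> \<alpha> j = \<psi> i j (\<alpha> i)"
    and "j < n"
  shows "retract 0 (\<alpha> j) = \<alpha> 0"
proof (cases "j = 0")
  case True
  then show ?thesis using assms(1,3) retract_id by auto
next
  case False
  then show ?thesis using assms retract_psi[of 0 j "\<alpha> 0"] by auto
qed

context
  fixes k :: nat
  assumes digirth: "\<And>i. i < n \<Longrightarrow> digirth_gt (V i) (E i) k"
begin

lemma closed_walk_long:
  assumes "i < n" "(x, x) \<in> E i ^^ m" "0 < m"
  shows "k < m"
  using digirth_gt_closed_walk[OF digirth[OF assms(1)] arcs_subset[OF assms(1)] assms(2,3)] .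

lemma dpath_to_psi_long:
  assumes ij: "i < j" "j < n" and a: "a \<in> V i - R"
    and p: "dpath (\<Union>i<n. V i) (\<Union>i<n. E i) p" "hd p = a" "last p = \<psi> i j a"
  shows "k < length p - 1"
proof -
  have i: "i < n" using ij by simp
  have "\<psi> i j a \<in> V j" using bij[OF ij] a by (auto dest: bij_betwE)
  with a inter[OF ij] have "\<psi> i j a \<noteq> a" by auto
  with p have "0 < length p - 1" by (cases p; cases "tl p") (auto simp: dpath_def)
  moreover have "(retract i (hd p), retract i (last p)) \<in> E i ^^ (length p - 1)"
    using retract_relpow[OF i dpath_relpow[OF p(1)]] .
  moreover have "retract i (hd p) = a" "retract i (last p) = a"
    using retract_id[OF i] retract_psi[OF ij] a p by auto
  ultimately show ?thesis using closed_walk_long[OF i] by simp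
qed

lemma digirth_gt_Union: "digirth_gt (\<Union>i<n. V i) (\<Union>i<n. E i) k"
  unfolding digirth_gt_def
proof (intro allI impI)
  fix c assume c: "dcycle (\<Union>i<n. V i) (\<Union>i<n. E i) c"
  then have m: "0 < length c" unfolding dcycle_def by simp
  with dcycle_relpow[OF c m, of "length c"]
  have "(c ! 0, c ! 0) \<in> (\<Union>i<n. E i) ^^ length c" by simp
  with n_pos have "(retract 0 (c ! 0), retract 0 (c ! 0)) \<in> E 0 ^^ length c"
    by (simp add: retract_relpow)
  moreover have "0 < n" using n_pos by simp
  ultimately show "k < length c" using m by (simp add: closed_walk_long)
qed

lemma digirth_gt_with_cycle_arcs:
  assumes kn: "k < n" and \<alpha>_outside: "\<And>i. i < n \<Longrightarrow> \<alpha> i \<in> V i - R"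
    and \<alpha>_\<psi>: "\<And>i j. i < j \<Longrightarrow> j < n \<Longrightarrow> \<alpha> j = \<psi> i j (\<alpha> i)"
  shows "digirth_gt (\<Union>i<n. V i) ((\<Union>i<n. E i) \<union> {(\<alpha> q, \<alpha> (Suc q mod n)) | q. q < n}) k"
  unfolding digirth_gt_def
proof (intro allI impI)
  let ?A = "{(\<alpha> q, \<alpha> (Suc q mod n)) | q. q < n}"
  let ?F = "(\<Union>i<n. E i) \<union> ?A"
  fix c assume c: "dcycle (\<Union>i<n. V i) ?F c"
  let ?m = "length c"
  have m: "0 < ?m" using c unfolding dcycle_def by simp
  have n0: "0 < n" using n_pos by simp
  show "k < ?m"
  proof (cases "\<exists>s<?m. (c ! s, c ! (Suc s mod ?m)) \<in> (\<Union>i<n. E i)")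
    case True
    then obtain s where s: "s < ?m" "(c ! s, c ! (Suc s mod ?m)) \<in> (\<Union>i<n. E i)" by blast
    define s' where "s' = Suc s mod ?m"
    have "s' < ?m" using m by (simp add: s'_def)
    moreover have "(s' + (?m - 1)) mod ?m = s"
    proof (cases "Suc s < ?m")
      case True
      then have "s' + (?m - 1) = s + ?m" by (simp add: s'_def)
      with s(1) show ?thesis by simp
    next
      case False
      with s(1) have "Suc s = ?m" by simp
      then show ?thesis by (simp add: s'_def)
    qed
    ultimately have "(c ! s', c ! s) \<in> ?F ^^ (?m - 1)"
      using dcycle_relpow[OF c, of s' "?m - 1"] by simp
    moreover have "(retract 0 u, retract 0 v) \<in> E 0 \<union> Id" if "(u, v) \<in> ?F" for u v
    proof (cases "(u, v) \<in> (\<Union>i<n. E i)")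
      case False
      with that obtain q where "q < n" "u = \<alpha> q" "v = \<alpha> (Suc q mod n)" by blast
      with n0 show ?thesis by (simp add: retract_0_outside_R[OF \<alpha>_outside \<alpha>_\<psi>])
    qed (use retract_hom[OF n0] in blast)
    ultimately have "(retract 0 (c ! s'), retract 0 (c ! s)) \<in> (E 0 \<union> Id) ^^ (?m - 1)"
      by (rule relpow_hom[rotated])
    from relpow_Un_Id_shorter[OF this] obtain j
      where j: "j \<le> ?m - 1" "(retract 0 (c ! s'), retract 0 (c ! s)) \<in> E 0 ^^ j"
      by blast
    have "(retract 0 (c ! s), retract 0 (c ! s')) \<in> E 0"
      using retract_hom[OF n0 s(2)] by (simp add: s'_def)
    from relpow_Suc_I2[OF this j(2)] have "k < Suc j"
      using n0 by (simp add: closed_walk_long)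
    with j m show ?thesis by linarith
  next
    case False
    have "(c ! s, c ! (Suc s mod ?m)) \<in> ?A" if "s < ?m" for s
      using c False that unfolding dcycle_def by auto
    with c have "dcycle (\<Union>i<n. V i) ?A c" unfolding dcycle_def by simp
    from dcycle_relpow[OF this m, of ?m] have "(c ! 0, c ! 0) \<in> ?A ^^ ?m" by simp
    with inj_on_outside_R[of \<alpha>] \<alpha>_outside m have "n \<le> ?m"
      by (simp add: cycle_arcs_closed_walk)
    with kn show ?thesis by simp
  qed
qed

end

end

theorem lemma2p1:
  fixes n :: nat
    and V :: "nat \<Rightarrow> 'a set"
    and E :: "nat \<Rightarrow> ('a \<times> 'a) set"
    and R :: "'a set"
    and \<psi> :: "nat \<Rightarrow> nat \<Rightarrow> 'a \<Rightarrow> 'a"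
  assumes n_pos: "n \<ge> 1"
    and digr: "\<And>i. i < n \<Longrightarrow> digraph (V i) (E i)"
    and inter: "\<And>i j. i < j \<Longrightarrow> j < n \<Longrightarrow> V i \<inter> V j = R"
    and bij: "\<And>i j. i < j \<Longrightarrow> j < n \<Longrightarrow> bij_betw (\<psi> i j) (V i) (V j)"
    and iso: "\<And>i j u v. i < j \<Longrightarrow> j < n \<Longrightarrow> u \<in> V i \<Longrightarrow> v \<in> V i \<Longrightarrow>
                ((u, v) \<in> E i \<longleftrightarrow> (\<psi> i j u, \<psi> i j v) \<in> E j)"
    and idR: "\<And>i j x. i < j \<Longrightarrow> j < n \<Longrightarrow> x \<in> R \<Longrightarrow> \<psi> i j x = x"
  shows "digraph (\<Union>i<n. V i) (\<Union>i<n. E i) \<and>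
    (\<forall>k::nat. k \<ge> 3 \<longrightarrow> (\<forall>i<n. digirth_gt (V i) (E i) k) \<longrightarrow>
       (\<forall>i j a p. i < j \<longrightarrow> j < n \<longrightarrow> a \<in> V i - R \<longrightarrow>
           dpath (\<Union>i<n. V i) (\<Union>i<n. E i) p \<longrightarrow> hd p = a \<longrightarrow> last p = \<psi> i j a \<longrightarrow>
           k < length p - 1)
     \<and> digirth_gt (\<Union>i<n. V i) (\<Union>i<n. E i) k
     \<and> (\<forall>\<alpha> :: nat \<Rightarrow> 'a. k < n \<longrightarrow> (\<forall>i<n. \<alpha> i \<in> V i - R) \<longrightarrow>
           (\<forall>i j. i < j \<longrightarrow> j < n \<longrightarrow> \<alpha> j = \<psi> i j (\<alpha> i)) \<longrightarrow>
           digirth_gt (\<Union>i<n. V i)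
             ((\<Union>i<n. E i) \<union> {(\<alpha> (n - 1), \<alpha> 0)} \<union> {(\<alpha> i, \<alpha> (i + 1)) | i. i < n - 1}) k))"
proof -
  interpret amalgam n V E R \<psi> using assms by unfold_locales
  have n0: "0 < n" using n_pos by simp
  show ?thesis
  proof (intro conjI allI impI)
    fix k :: nat assume "\<forall>i<n. digirth_gt (V i) (E i) k"
    then have digirth: "\<And>i. i < n \<Longrightarrow> digirth_gt (V i) (E i) k" by blast
    show "k < length p - 1"
      if "i < j" "j < n" "a \<in> V i - R" "dpath (\<Union>i<n. V i) (\<Union>i<n. E i) p"
        "hd p = a" "last p = \<psi> i j a" for i j a p
      using dpath_to_psi_long[OF digirth that] .
    show "digirth_gt (\<Union>i<n. V i) (\<Union>i<n. E i) k" using digirth_gt_Union[OF digirth] .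
    fix \<alpha> :: "nat \<Rightarrow> 'a"
    assume "k < n" "\<forall>i<n. \<alpha> i \<in> V i - R" "\<forall>i j. i < j \<longrightarrow> j < n \<longrightarrow> \<alpha> j = \<psi> i j (\<alpha> i)"
    then have "digirth_gt (\<Union>i<n. V i) ((\<Union>i<n. E i) \<union> {(\<alpha> q, \<alpha> (Suc q mod n)) | q. q < n}) k"
      using digirth_gt_with_cycle_arcs[OF digirth, of \<alpha>] by blast
    then show "digirth_gt (\<Union>i<n. V i)
        ((\<Union>i<n. E i) \<union> {(\<alpha> (n - 1), \<alpha> 0)} \<union> {(\<alpha> i, \<alpha> (i + 1)) | i. i < n - 1}) k"
      by (simp only: Un_assoc cycle_arcs_mod[OF n0])
  qed (rule digraph_Union)
qed

end
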